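(* Let $K,\Delta K\in\mathbb{R}^{(m+n)\times(m+n)}$ be symmetric, suppose $K+\Delta K=\widetilde LJ_{m+n}\widetilde L^T$ is a generalized Cholesky factorization, and suppose $|\Delta K|\le\varepsilon|\widetilde L||\widetilde L^T|$ entrywise for some $\varepsilon\ge0$ with $\mathrm{cond}_F(\widetilde L)\,\mathrm{cond}_F(\widetilde L^{-T})\,\varepsilon<\tfrac12$. Then $K$ has a generalized Cholesky factorization $K=LJ_{m+n}L^T$ such that, with $\Delta L=\widetilde L-L$, $$\|\widetilde L^{-1}\Delta L\|_F\le\frac{1}{\sqrt2}\left(1-\sqrt{1-2\,\mathrm{cond}_F(\widetilde L)\,\mathrm{cond}_F(\widetilde L^{-T})\,\varepsilon}\right).$$
   Context: $J_{m+n}=\begin{bmatrix} I_m&0\\0&-I_n\end{bmatrix}$. A generalized Cholesky factorization of $M\in\mathbb{R}^{(m+n)\times(m+n)}$ is $M=LJ_{m+n}L^T$ with $L=\begin{bmatrix}L_{11}&0\\L_{21}&L_{22}\end{bmatrix}$, $L_{11}\in\mathbb{R}^{m\times m}$, $L_{22}\in\mathbb{R}^{n\times n}$ nonsingular lower triangular, $L_{21}\in\mathbb{R}^{n\times m}$. For $X=(x_{ij})$, $|X|=(|x_{ij}|)$; matrix inequalities are entrywise. For nonsingular $X$, $\mathrm{cond}_F(X)=\|\,|X^{-1}|\,|X|\,\|_F$, and $\widetilde L^{-T}=(\widetilde L^{-1})^T$. $\|\cdot\|_F$ is the Frobenius norm. *)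

theory Defs
  imports "Jordan_Normal_Form.Determinant"
begin

definition Jmat :: "nat \<Rightarrow> nat \<Rightarrow> real mat" where
  "Jmat m n = four_block_mat (1\<^sub>m m) (0\<^sub>m m n) (0\<^sub>m n m) (- 1\<^sub>m n)"

definition lower_tri :: "real mat \<Rightarrow> bool" where
  "lower_tri A \<longleftrightarrow> (\<forall>i<dim_row A. \<forall>j<dim_col A. i < j \<longrightarrow> A $$ (i,j) = 0)"

definition gen_chol_factor :: "nat \<Rightarrow> nat \<Rightarrow> real mat \<Rightarrow> bool" where
  "gen_chol_factor m n L \<longleftrightarrow>
     L \<in> carrier_mat (m+n) (m+n) \<and>
     (\<exists>L11 L21 L22.
        L11 \<in> carrier_mat m m \<and> L21 \<in> carrier_mat n m \<and> L22 \<in> carrier_mat n n \<and>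
        lower_tri L11 \<and> lower_tri L22 \<and> det L11 \<noteq> 0 \<and> det L22 \<noteq> 0 \<and>
        L = four_block_mat L11 (0\<^sub>m m n) L21 L22)"

definition is_gen_chol :: "nat \<Rightarrow> nat \<Rightarrow> real mat \<Rightarrow> real mat \<Rightarrow> bool" where
  "is_gen_chol m n M L \<longleftrightarrow> gen_chol_factor m n L \<and> M = L * Jmat m n * transpose_mat L"

definition abs_mat :: "real mat \<Rightarrow> real mat" where
  "abs_mat A = map_mat abs A"

definition frob_norm :: "real mat \<Rightarrow> real" where
  "frob_norm A = sqrt (\<Sum>i<dim_row A. \<Sum>j<dim_col A. (A $$ (i,j))\<^sup>2)"

definition mat_inv :: "real mat \<Rightarrow> real mat" where
  "mat_inv A = (SOME B. B \<in> carrier_mat (dim_row A) (dim_row A) \<and> inverts_mat A B \<and> inverts_mat B A)"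

definition condF :: "real mat \<Rightarrow> real" where
  "condF X = frob_norm (abs_mat (mat_inv X) * abs_mat X)"

end

theory Submission
  imports Defs "HOL-Analysis.L2_Norm"
begin

text \<open>
  Write K + dK = Lt J Lt^T and G = Lt^{-1} dK Lt^{-T}.  Then
  K = Lt (J - G) Lt^T, so it suffices to factor J - G = M J M^T with M close to I and to
  take L = Lt M; then Lt^{-1} (Lt - L) = I - M.  The componentwise hypothesis gives
  |G| \<le> \<epsilon> (|Lt^{-1}| |Lt|) (|Lt^T| |Lt^{-T}|), hence \<parallel>G\<parallel>_F \<le> g, the product of the two
  condition numbers times \<epsilon>.  We seek M = I - Y J with Y lower triangular; the condition
  M J M^T = J - G becomes Y + Y^T = G + Y J Y^T, i.e. Y is a fixed point of the map
  Y \<mapsto> low_half (G + Y J Y^T).  For g < 1/2 this map is a contraction of the Frobenius ball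
  of radius r = (1 - sqrt (1 - 2g)) / sqrt 2, and its fixed point satisfies \<parallel>I - M\<parallel>_F = \<parallel>Y\<parallel>_F \<le> r.
\<close>

definition fnorm :: "nat \<Rightarrow> (nat \<times> nat \<Rightarrow> real) \<Rightarrow> real" where
  "fnorm N Y = L2_set Y ({..<N} \<times> {..<N})"

definition sym_on :: "nat \<Rightarrow> (nat \<times> nat \<Rightarrow> real) \<Rightarrow> bool" where
  "sym_on N G \<longleftrightarrow> (\<forall>i<N. \<forall>j<N. G (i,j) = G (j,i))"

text \<open>The strictly lower part plus half the diagonal: for symmetric S, X = low_half S is the
  lower triangular solution of X + X^T = S.\<close>

definition low_half :: "(nat \<times> nat \<Rightarrow> real) \<Rightarrow> nat \<times> nat \<Rightarrow> real" where
  "low_half S = (\<lambda>(i,j). if j < i then S (i,j) else if i = j then S (i,j) / 2 else 0)"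

definition sprod :: "nat \<Rightarrow> (nat \<Rightarrow> real) \<Rightarrow> (nat \<times> nat \<Rightarrow> real) \<Rightarrow> (nat \<times> nat \<Rightarrow> real)
    \<Rightarrow> nat \<times> nat \<Rightarrow> real" where
  "sprod N s A C = (\<lambda>(i,j). \<Sum>l<N. A (i,l) * s l * C (j,l))"

lemma fnorm_sq: "(fnorm N Y)\<^sup>2 = (\<Sum>i<N. \<Sum>j<N. (Y (i,j))\<^sup>2)"
  unfolding fnorm_def L2_set_def by (simp add: sum_nonneg sum.cartesian_product)

lemma fnorm_nonneg: "0 \<le> fnorm N Y"
  unfolding fnorm_def by simp

lemma fnorm_le_by_sq: "(fnorm N Y)\<^sup>2 \<le> c\<^sup>2 \<Longrightarrow> 0 \<le> c \<Longrightarrow> fnorm N Y \<le> c"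
  using fnorm_nonneg by (meson power2_le_imp_le)

lemma fnorm_cong: "(\<And>i j. i < N \<Longrightarrow> j < N \<Longrightarrow> Y (i,j) = Z (i,j)) \<Longrightarrow> fnorm N Y = fnorm N Z"
  unfolding fnorm_def by (rule L2_set_cong) auto

lemma fnorm_abs: "fnorm N (\<lambda>p. \<bar>Y p\<bar>) = fnorm N Y"
  unfolding fnorm_def L2_set_def by simp

lemma fnorm_entry: "i < N \<Longrightarrow> j < N \<Longrightarrow> \<bar>Y (i,j)\<bar> \<le> fnorm N Y"
  using member_le_L2_set[of "{..<N} \<times> {..<N}" "(i,j)" "\<lambda>p. \<bar>Y p\<bar>"] fnorm_abs[of N Y]
  by (simp add: fnorm_def)

lemma fnorm_triangle: "fnorm N (\<lambda>p. Y p + Z p) \<le> fnorm N Y + fnorm N Z"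
  unfolding fnorm_def by (rule L2_set_triangle_ineq)

lemma fnorm_mono:
  assumes "\<And>i j. i < N \<Longrightarrow> j < N \<Longrightarrow> \<bar>A (i,j)\<bar> \<le> B (i,j)"
  shows "fnorm N A \<le> fnorm N B"
  unfolding fnorm_abs[of N A, symmetric] unfolding fnorm_def
  by (rule L2_set_mono) (auto intro: assms)

lemma fnorm_transpose: "fnorm N (\<lambda>(i,j). Y (j,i)) = fnorm N Y"
proof -
  have "(\<Sum>p\<in>{..<N} \<times> {..<N}. (Y (snd p, fst p))\<^sup>2) = (\<Sum>p\<in>{..<N} \<times> {..<N}. (Y p)\<^sup>2)"
    by (rule sum.reindex_bij_witness[of _ prod.swap prod.swap]) auto
  thus ?thesis unfolding fnorm_def L2_set_def by (simp add: case_prod_beta)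
qed

text \<open>Halving the symmetric part loses a factor sqrt 2: each off-diagonal pair of a symmetric
  array survives once, the diagonal is halved.\<close>

lemma fnorm_low_half:
  assumes "sym_on N G"
  shows "fnorm N (low_half G) \<le> fnorm N G / sqrt 2"
proof -
  have pair: "(low_half G (i,j))\<^sup>2 + (low_half G (j,i))\<^sup>2 \<le> (G (i,j))\<^sup>2"
    if "i < N" "j < N" for i j
  proof -
    have "G (j,i) = G (i,j)" using assms that unfolding sym_on_def by auto
    moreover consider "j < i" | "i = j" | "i < j" by linarith
    ultimately show ?thesis by cases (auto simp: low_half_def power_divide)
  qed
  have "(fnorm N (\<lambda>(i,j). low_half G (j,i)))\<^sup>2 = (fnorm N (low_half G))\<^sup>2"
    by (simp add: fnorm_transpose)
  hence "2 * (fnorm N (low_half G))\<^sup>2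
      = (\<Sum>i<N. \<Sum>j<N. (low_half G (i,j))\<^sup>2 + (low_half G (j,i))\<^sup>2)"
    unfolding fnorm_sq by (simp add: sum.distrib)
  also have "\<dots> \<le> (\<Sum>i<N. \<Sum>j<N. (G (i,j))\<^sup>2)"
    by (intro sum_mono pair) auto
  finally have "2 * (fnorm N (low_half G))\<^sup>2 \<le> (fnorm N G)\<^sup>2"
    unfolding fnorm_sq .
  hence "(fnorm N (low_half G))\<^sup>2 \<le> (fnorm N G / sqrt 2)\<^sup>2"
    by (simp add: power_divide)
  thus ?thesis by (rule fnorm_le_by_sq) (simp add: fnorm_nonneg)
qed

lemma fnorm_sprod:
  assumes s: "\<And>l. \<bar>s l\<bar> = 1"
  shows "fnorm N (sprod N s A C) \<le> fnorm N A * fnorm N C"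
proof -
  have entry: "(sprod N s A C (i,j))\<^sup>2 \<le> (\<Sum>l<N. (A (i,l))\<^sup>2) * (\<Sum>l<N. (C (j,l))\<^sup>2)" for i j
  proof -
    have "\<bar>sprod N s A C (i,j)\<bar> \<le> (\<Sum>l<N. \<bar>A (i,l)\<bar> * \<bar>C (j,l)\<bar>)"
      unfolding sprod_def using sum_abs[of "\<lambda>l. A (i,l) * s l * C (j,l)" "{..<N}"]
      by (simp add: abs_mult s)
    also have "\<dots> \<le> L2_set (\<lambda>l. A (i,l)) {..<N} * L2_set (\<lambda>l. C (j,l)) {..<N}"
      by (rule L2_set_mult_ineq)
    finally have "(sprod N s A C (i,j))\<^sup>2
        \<le> (L2_set (\<lambda>l. A (i,l)) {..<N} * L2_set (\<lambda>l. C (j,l)) {..<N})\<^sup>2"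
      by (metis abs_ge_zero order_trans power2_abs power_mono)
    thus ?thesis unfolding power_mult_distrib L2_set_def by (simp add: sum_nonneg)
  qed
  have "(fnorm N (sprod N s A C))\<^sup>2
      \<le> (\<Sum>i<N. \<Sum>j<N. (\<Sum>l<N. (A (i,l))\<^sup>2) * (\<Sum>l<N. (C (j,l))\<^sup>2))"
    unfolding fnorm_sq by (intro sum_mono entry)
  also have "\<dots> = (fnorm N A * fnorm N C)\<^sup>2"
    unfolding power_mult_distrib fnorm_sq by (simp add: sum_product)
  finally show ?thesis by (rule fnorm_le_by_sq) (simp add: fnorm_nonneg)
qed

lemma sym_on_sprod: "sym_on N (sprod N s Y Y)"
  unfolding sym_on_def sprod_def by (auto intro!: sum.cong)

lemma sprod_diff:
  "sprod N s Y Y p - sprod N s Z Z p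
     = sprod N s Y (\<lambda>q. Y q - Z q) p + sprod N s (\<lambda>q. Y q - Z q) Z p"
  by (cases p) (simp add: sprod_def sum_subtractf[symmetric] sum.distrib[symmetric] algebra_simps)

definition quad_map :: "nat \<Rightarrow> (nat \<Rightarrow> real) \<Rightarrow> (nat \<times> nat \<Rightarrow> real) \<Rightarrow> (nat \<times> nat \<Rightarrow> real)
    \<Rightarrow> nat \<times> nat \<Rightarrow> real" where
  "quad_map N s G Y = low_half (\<lambda>p. G p + sprod N s Y Y p)"

lemma fnorm_quad_map:
  assumes "sym_on N G" "\<And>l. \<bar>s l\<bar> = 1"
  shows "fnorm N (quad_map N s G Y) \<le> (fnorm N G + (fnorm N Y)\<^sup>2) / sqrt 2"
proof -
  have "sym_on N (\<lambda>p. G p + sprod N s Y Y p)"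
    using assms(1) sym_on_sprod[of N s Y] unfolding sym_on_def by auto
  hence "fnorm N (quad_map N s G Y) \<le> fnorm N (\<lambda>p. G p + sprod N s Y Y p) / sqrt 2"
    unfolding quad_map_def by (rule fnorm_low_half)
  also have "\<dots> \<le> (fnorm N G + (fnorm N Y)\<^sup>2) / sqrt 2"
    unfolding power2_eq_square
    by (intro divide_right_mono order_trans[OF fnorm_triangle] add_left_mono fnorm_sprod assms) auto
  finally show ?thesis .
qed

lemma fnorm_quad_map_diff:
  assumes "\<And>l. \<bar>s l\<bar> = 1"
  shows "fnorm N (\<lambda>p. quad_map N s G Y p - quad_map N s G Z p)
           \<le> (fnorm N Y + fnorm N Z) / sqrt 2 * fnorm N (\<lambda>p. Y p - Z p)"
proof -
  define D where "D = (\<lambda>p. Y p - Z p)"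
  define H where "H = (\<lambda>p. sprod N s Y D p + sprod N s D Z p)"
  have H: "H p = sprod N s Y Y p - sprod N s Z Z p" for p
    unfolding H_def D_def by (rule sprod_diff[symmetric])
  have eq: "(\<lambda>p. quad_map N s G Y p - quad_map N s G Z p) = low_half H"
    by (auto simp: fun_eq_iff quad_map_def low_half_def H field_simps)
  have "sym_on N H"
    using sym_on_sprod[of N s Y] sym_on_sprod[of N s Z] unfolding sym_on_def H by auto
  hence "fnorm N (low_half H) \<le> fnorm N H / sqrt 2" by (rule fnorm_low_half)
  also have "\<dots> \<le> (fnorm N Y * fnorm N D + fnorm N D * fnorm N Z) / sqrt 2"
    unfolding H_def
    by (intro divide_right_mono order_trans[OF fnorm_triangle] add_mono fnorm_sprod assms) auto
  also have "\<dots> = (fnorm N Y + fnorm N Z) / sqrt 2 * fnorm N D" by (simp add: algebra_simps)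
  finally show ?thesis unfolding D_def eq .
qed

lemma geometric_increments_convergent:
  fixes a :: "nat \<Rightarrow> real"
  assumes d: "\<And>k. \<bar>a (Suc k) - a k\<bar> \<le> C * q^k" and q: "0 \<le> q" "q < 1"
  shows "convergent a"
proof -
  have "summable (\<lambda>k. C * q^k)"
    using q by (intro summable_mult summable_geometric) simp
  hence "summable (\<lambda>i. a (Suc i) - a i)"
    by (rule summable_comparison_test'[of _ 0]) (use d in simp)
  hence "(\<lambda>n. a 0 + (\<Sum>i<n. a (Suc i) - a i)) \<longlonglongrightarrow> a 0 + (\<Sum>i. a (Suc i) - a i)"
    by (intro tendsto_add summable_LIMSEQ) auto
  thus ?thesis unfolding convergent_def sum_lessThan_telescope by auto
qed

lemma contraction_fixed_point:
  fixes \<Phi> :: "(nat \<times> nat \<Rightarrow> real) \<Rightarrow> nat \<times> nat \<Rightarrow> real"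
  assumes r: "0 \<le> r" and q: "0 \<le> q" "q < 1"
    and ball: "\<And>Y. fnorm N Y \<le> r \<Longrightarrow> fnorm N (\<Phi> Y) \<le> r"
    and contr: "\<And>Y Z. fnorm N Y \<le> r \<Longrightarrow> fnorm N Z \<le> r \<Longrightarrow>
                  fnorm N (\<lambda>p. \<Phi> Y p - \<Phi> Z p) \<le> q * fnorm N (\<lambda>p. Y p - Z p)"
    and cont: "\<And>Ys Y i j. (\<And>i j. i < N \<Longrightarrow> j < N \<Longrightarrow> (\<lambda>k. Ys k (i,j)) \<longlonglongrightarrow> Y (i,j)) \<Longrightarrow>
                  i < N \<Longrightarrow> j < N \<Longrightarrow> (\<lambda>k. \<Phi> (Ys k) (i,j)) \<longlonglongrightarrow> \<Phi> Y (i,j)"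
  shows "\<exists>Y. (\<forall>i<N. \<forall>j<N. Y (i,j) = \<Phi> Y (i,j)) \<and> fnorm N Y \<le> r"
proof -
  define Ys where "Ys k = (\<Phi> ^^ k) (\<lambda>_. 0)" for k
  have Ys_Suc: "Ys (Suc k) = \<Phi> (Ys k)" for k unfolding Ys_def by simp
  have Ys_ball: "fnorm N (Ys k) \<le> r" for k
  proof (induction k)
    case 0 show ?case using r by (simp add: Ys_def fnorm_def L2_set_def)
  next
    case (Suc k) thus ?case unfolding Ys_Suc by (rule ball)
  qed
  define C where "C = fnorm N (Ys 1)"
  have Ys_step: "fnorm N (\<lambda>p. Ys (Suc k) p - Ys k p) \<le> C * q^k" for k
  proof (induction k)
    case 0 show ?case by (simp add: C_def Ys_def)
  next
    case (Suc k)
    have "fnorm N (\<lambda>p. Ys (Suc (Suc k)) p - Ys (Suc k) p) \<le> q * fnorm N (\<lambda>p. Ys (Suc k) p - Ys k p)"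
      unfolding Ys_Suc[of "Suc k"] Ys_Suc[of k] using contr Ys_ball Ys_Suc by metis
    also have "\<dots> \<le> q * (C * q^k)" by (intro mult_left_mono Suc q)
    finally show ?case by (simp add: algebra_simps)
  qed
  define Y where "Y p = lim (\<lambda>k. Ys k p)" for p
  have lim: "(\<lambda>k. Ys k (i,j)) \<longlonglongrightarrow> Y (i,j)" if "i < N" "j < N" for i j
  proof -
    have "convergent (\<lambda>k. Ys k (i,j))"
    proof (rule geometric_increments_convergent[OF _ q])
      show "\<bar>Ys (Suc k) (i,j) - Ys k (i,j)\<bar> \<le> C * q^k" for k
        using fnorm_entry[OF that, of "\<lambda>p. Ys (Suc k) p - Ys k p"] Ys_step[of k] by simp
    qed
    thus ?thesis unfolding Y_def by (simp add: convergent_LIMSEQ_iff)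
  qed
  have "Y (i,j) = \<Phi> Y (i,j)" if "i < N" "j < N" for i j
  proof (rule LIMSEQ_unique)
    show "(\<lambda>k. Ys (Suc k) (i,j)) \<longlonglongrightarrow> Y (i,j)" using lim[OF that] by (rule LIMSEQ_Suc)
    show "(\<lambda>k. Ys (Suc k) (i,j)) \<longlonglongrightarrow> \<Phi> Y (i,j)" unfolding Ys_Suc by (rule cont[where Ys=Ys and Y=Y, OF lim that])
  qed
  moreover have "(\<lambda>k. fnorm N (Ys k)) \<longlonglongrightarrow> fnorm N Y"
    unfolding fnorm_def L2_set_def
    by (intro tendsto_real_sqrt tendsto_sum tendsto_power) (auto intro: lim)
  hence "fnorm N Y \<le> r" by (rule LIMSEQ_le_const2) (use Ys_ball in auto)
  ultimately show ?thesis by blast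
qed

text \<open>The quadratic equation Y = low_half (G + Y diag(s) Y^T) has a solution of norm at most
  (1 - sqrt (1 - 2g)) / sqrt 2, the smaller root of r = (g + r^2) / sqrt 2, when
  the norm of G is at most g < 1/2.\<close>

lemma quad_map_fixed_point:
  assumes sym: "sym_on N G" and G: "fnorm N G \<le> g" and g: "g < 1/2"
    and s: "\<And>l. \<bar>s l\<bar> = 1"
  shows "\<exists>Y. (\<forall>i<N. \<forall>j<N. Y (i,j) = quad_map N s G Y (i,j))
             \<and> fnorm N Y \<le> (1 - sqrt (1 - 2*g)) / sqrt 2"
proof -
  define t where "t = sqrt (1 - 2*g)"
  have g0: "0 \<le> g" using G fnorm_nonneg order_trans by blast
  hence t: "0 < t" "t \<le> 1" "t\<^sup>2 = 1 - 2*g" using g unfolding t_def by auto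
  have "\<exists>Y. (\<forall>i<N. \<forall>j<N. Y (i,j) = quad_map N s G Y (i,j)) \<and> fnorm N Y \<le> (1 - t) / sqrt 2"
  proof (rule contraction_fixed_point)
    show "0 \<le> (1 - t) / sqrt 2" using t by simp
    show "0 \<le> 1 - t" "1 - t < 1" using t by auto
    show "fnorm N (quad_map N s G Y) \<le> (1 - t) / sqrt 2"
      if "fnorm N Y \<le> (1 - t) / sqrt 2" for Y
    proof -
      have "(fnorm N Y)\<^sup>2 \<le> ((1 - t) / sqrt 2)\<^sup>2"
        using that fnorm_nonneg by (intro power_mono) auto
      hence "fnorm N G + (fnorm N Y)\<^sup>2 \<le> 1 - t"
        using G t by (simp add: power_divide power2_eq_square algebra_simps)
      hence "(fnorm N G + (fnorm N Y)\<^sup>2) / sqrt 2 \<le> (1 - t) / sqrt 2"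
        by (simp add: divide_right_mono)
      with fnorm_quad_map[where s=s and Y=Y, OF sym s] show ?thesis by (rule order_trans)
    qed
    show "fnorm N (\<lambda>p. quad_map N s G Y p - quad_map N s G Z p) \<le> (1 - t) * fnorm N (\<lambda>p. Y p - Z p)"
      if "fnorm N Y \<le> (1 - t) / sqrt 2" "fnorm N Z \<le> (1 - t) / sqrt 2" for Y Z
    proof -
      have "fnorm N Y + fnorm N Z \<le> 2 * ((1 - t) / sqrt 2)" using that by linarith
      hence "(fnorm N Y + fnorm N Z) / sqrt 2 \<le> 2 * ((1 - t) / sqrt 2) / sqrt 2"
        by (rule divide_right_mono) simp
      also have "\<dots> = 1 - t" by simp
      finally show ?thesis
        using fnorm_quad_map_diff[where s=s and G=G and Y=Y and Z=Z, OF s] fnorm_nonneg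
        by (meson mult_right_mono order_trans)
    qed
    show "(\<lambda>k. quad_map N s G (Ys k) (i,j)) \<longlonglongrightarrow> quad_map N s G Y (i,j)"
      if "\<And>i j. i < N \<Longrightarrow> j < N \<Longrightarrow> (\<lambda>k. Ys k (i,j)) \<longlonglongrightarrow> Y (i,j)" "i < N" "j < N" for Ys Y i j
      unfolding quad_map_def low_half_def sprod_def using that
      by (auto intro!: tendsto_intros)
  qed
  thus ?thesis unfolding t_def .
qed

lemma quad_map_fixed_point_eq:
  assumes sym: "sym_on N G" and fp: "\<forall>i<N. \<forall>j<N. Y (i,j) = quad_map N s G Y (i,j)"
    and ij: "i < N" "j < N"
  shows "i < j \<Longrightarrow> Y (i,j) = 0"
    and "Y (i,j) + Y (j,i) = G (i,j) + sprod N s Y Y (i,j)"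
proof -
  show "i < j \<Longrightarrow> Y (i,j) = 0" using fp ij by (simp add: quad_map_def low_half_def)
  have "G (j,i) = G (i,j)" "sprod N s Y Y (j,i) = sprod N s Y Y (i,j)"
    using sym sym_on_sprod[of N s Y] ij unfolding sym_on_def by auto
  moreover consider "j < i" | "i = j" | "i < j" by linarith
  ultimately show "Y (i,j) + Y (j,i) = G (i,j) + sprod N s Y Y (i,j)"
    using fp ij by cases (auto simp: quad_map_def low_half_def)
qed

lemma mult_mat_entry:
  assumes "A \<in> carrier_mat a k" "B \<in> carrier_mat k b" "i < a" "j < b"
  shows "(A * B) $$ (i,j) = (\<Sum>l<k. A $$ (i,l) * B $$ (l,j))"
  using assms by (simp add: scalar_prod_def atLeast0LessThan)

lemma frob_norm_fnorm:
  assumes "A \<in> carrier_mat N N"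
  shows "frob_norm A = fnorm N (\<lambda>p. A $$ p)"
  using assms fnorm_sq[of N "\<lambda>p. A $$ p"] fnorm_nonneg[of N "\<lambda>p. A $$ p"]
  by (simp add: frob_norm_def real_sqrt_unique)

lemma frob_norm_mult:
  assumes "A \<in> carrier_mat N N" "B \<in> carrier_mat N N"
  shows "frob_norm (A * B) \<le> frob_norm A * frob_norm B"
proof -
  have "frob_norm (A * B) = fnorm N (sprod N (\<lambda>_. 1) (\<lambda>p. A $$ p) (\<lambda>(i,j). B $$ (j,i)))"
    unfolding frob_norm_fnorm[OF mult_carrier_mat[OF assms]]
    by (rule fnorm_cong) (simp add: sprod_def mult_mat_entry[OF assms])
  also have "\<dots> \<le> fnorm N (\<lambda>p. A $$ p) * fnorm N (\<lambda>(i,j). B $$ (j,i))"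
    by (rule fnorm_sprod) simp
  finally show ?thesis
    unfolding fnorm_transpose frob_norm_fnorm[OF assms(1)] frob_norm_fnorm[OF assms(2)] .
qed

lemma frob_norm_mono:
  assumes "A \<in> carrier_mat N N" "B \<in> carrier_mat N N" "abs_mat A \<le> B"
  shows "frob_norm A \<le> frob_norm B"
  unfolding frob_norm_fnorm[OF assms(1)] frob_norm_fnorm[OF assms(2)]
  using assms by (intro fnorm_mono) (auto simp: less_eq_mat_def abs_mat_def)

lemma frob_norm_smult:
  assumes "A \<in> carrier_mat N N" "0 \<le> c"
  shows "frob_norm (c \<cdot>\<^sub>m A) = c * frob_norm A"
proof -
  have "fnorm N (\<lambda>p. (c \<cdot>\<^sub>m A) $$ p) = fnorm N (\<lambda>p. c * A $$ p)"
    by (rule fnorm_cong) (use assms in simp)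
  thus ?thesis
    unfolding frob_norm_fnorm[OF assms(1)] frob_norm_fnorm[OF smult_carrier_mat[OF assms(1)]]
    using assms(2) by (simp add: fnorm_def L2_set_right_distrib)
qed

lemma abs_mat_carrier [simp]: "abs_mat A \<in> carrier_mat a b \<longleftrightarrow> A \<in> carrier_mat a b"
  unfolding abs_mat_def carrier_mat_def by simp

lemma abs_mat_mult_le:
  assumes "A \<in> carrier_mat a k" "B \<in> carrier_mat k b"
  shows "abs_mat (A * B) \<le> abs_mat A * abs_mat B"
  unfolding less_eq_mat_def
proof (intro conjI allI impI)
  fix i j assume "i < dim_row (abs_mat A * abs_mat B)" "j < dim_col (abs_mat A * abs_mat B)"
  hence ij: "i < a" "j < b" using assms by (auto simp: abs_mat_def)
  have "abs_mat (A * B) $$ (i,j) = \<bar>\<Sum>l<k. A $$ (i,l) * B $$ (l,j)\<bar>"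
    using assms ij by (simp add: abs_mat_def mult_mat_entry[OF assms ij])
  also have "\<dots> \<le> (\<Sum>l<k. \<bar>A $$ (i,l)\<bar> * \<bar>B $$ (l,j)\<bar>)"
    unfolding abs_mult[symmetric] by (rule sum_abs)
  also have "\<dots> = (abs_mat A * abs_mat B) $$ (i,j)"
    using assms ij by (subst mult_mat_entry[of "abs_mat A" a k "abs_mat B" b]) (auto simp: abs_mat_def)
  finally show "abs_mat (A * B) $$ (i,j) \<le> (abs_mat A * abs_mat B) $$ (i,j)" .
qed (simp_all add: abs_mat_def)

lemma mult_left_mono_mat:
  fixes A B C :: "real mat"
  assumes A: "A \<in> carrier_mat a k" "\<And>i j. i < a \<Longrightarrow> j < k \<Longrightarrow> 0 \<le> A $$ (i,j)"
    and BC: "B \<in> carrier_mat k b" "C \<in> carrier_mat k b" "B \<le> C"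
  shows "A * B \<le> A * C"
  unfolding less_eq_mat_def
proof (intro conjI allI impI)
  fix i j assume "i < dim_row (A * C)" "j < dim_col (A * C)"
  hence ij: "i < a" "j < b" using A BC by auto
  show "(A * B) $$ (i,j) \<le> (A * C) $$ (i,j)"
    unfolding mult_mat_entry[OF A(1) BC(1) ij] mult_mat_entry[OF A(1) BC(2) ij]
    using BC ij by (intro sum_mono mult_left_mono A) (auto simp: less_eq_mat_def)
qed (use A BC in simp_all)

lemma mult_right_mono_mat:
  fixes A B C :: "real mat"
  assumes A: "A \<in> carrier_mat k b" "\<And>i j. i < k \<Longrightarrow> j < b \<Longrightarrow> 0 \<le> A $$ (i,j)"
    and BC: "B \<in> carrier_mat a k" "C \<in> carrier_mat a k" "B \<le> C"
  shows "B * A \<le> C * A"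
  unfolding less_eq_mat_def
proof (intro conjI allI impI)
  fix i j assume "i < dim_row (C * A)" "j < dim_col (C * A)"
  hence ij: "i < a" "j < b" using A BC by auto
  show "(B * A) $$ (i,j) \<le> (C * A) $$ (i,j)"
    unfolding mult_mat_entry[OF BC(1) A(1) ij] mult_mat_entry[OF BC(2) A(1) ij]
    using BC ij by (intro sum_mono mult_right_mono A) (auto simp: less_eq_mat_def)
qed (use A BC in simp_all)

lemma congruence_frob_bound:
  assumes A: "A \<in> carrier_mat N N" and L: "L \<in> carrier_mat N N" and dK: "dK \<in> carrier_mat N N"
    and bound: "abs_mat dK \<le> \<epsilon> \<cdot>\<^sub>m (abs_mat L * abs_mat (transpose_mat L))" and "0 \<le> \<epsilon>"
  shows "frob_norm (A * dK * transpose_mat A)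
           \<le> frob_norm (abs_mat A * abs_mat L) * frob_norm (abs_mat (transpose_mat L) * abs_mat (transpose_mat A)) * \<epsilon>"
proof -
  let ?a = "abs_mat A" and ?l = "abs_mat L" and ?lt = "abs_mat (transpose_mat L)"
    and ?at = "abs_mat (transpose_mat A)"
  have c: "?a \<in> carrier_mat N N" "?l \<in> carrier_mat N N" "?lt \<in> carrier_mat N N" "?at \<in> carrier_mat N N"
    "abs_mat dK \<in> carrier_mat N N" using A L dK by auto
  have nn: "0 \<le> ?a $$ (i,j)" "0 \<le> ?at $$ (i,j)" if "i < N" "j < N" for i j
    using that A by (auto simp: abs_mat_def)
  have "abs_mat (A * dK * transpose_mat A) \<le> abs_mat (A * dK) * ?at"
    using A dK by (intro abs_mat_mult_le) auto
  also have "\<dots> \<le> ?a * abs_mat dK * ?at"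
    using A dK c by (intro mult_right_mono_mat[OF c(4) nn(2)] abs_mat_mult_le) auto
  also have "\<dots> \<le> ?a * (\<epsilon> \<cdot>\<^sub>m (?l * ?lt)) * ?at"
    using c by (intro mult_right_mono_mat[OF c(4) nn(2)] mult_left_mono_mat[OF c(1) nn(1)] bound) auto
  also have "\<dots> = \<epsilon> \<cdot>\<^sub>m (?a * (?l * ?lt) * ?at)"
  proof -
    have "?a * (\<epsilon> \<cdot>\<^sub>m (?l * ?lt)) = \<epsilon> \<cdot>\<^sub>m (?a * (?l * ?lt))"
      by (rule mult_smult_distrib) (use c in auto)
    thus ?thesis using c by (simp add: mult_smult_assoc_mat[of _ N N])
  qed
  also have "?a * (?l * ?lt) * ?at = (?a * ?l) * (?lt * ?at)"
    using c by (simp add: assoc_mult_mat[of _ N N _ N _ N])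
  finally have "frob_norm (A * dK * transpose_mat A) \<le> frob_norm (\<epsilon> \<cdot>\<^sub>m ((?a * ?l) * (?lt * ?at)))"
    using A dK c by (intro frob_norm_mono) auto
  also have "\<dots> = \<epsilon> * frob_norm ((?a * ?l) * (?lt * ?at))"
    using c \<open>0 \<le> \<epsilon>\<close> by (intro frob_norm_smult) auto
  also have "\<dots> \<le> \<epsilon> * (frob_norm (?a * ?l) * frob_norm (?lt * ?at))"
    using c \<open>0 \<le> \<epsilon>\<close> by (intro mult_left_mono frob_norm_mult) auto
  finally show ?thesis by (simp add: algebra_simps)
qed

lemma mat_inv_eq:
  assumes A: "A \<in> carrier_mat N N" and B: "B \<in> carrier_mat N N"
    and AB: "A * B = 1\<^sub>m N" and BA: "B * A = 1\<^sub>m N"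
  shows "mat_inv A = B"
proof -
  let ?P = "\<lambda>B. B \<in> carrier_mat (dim_row A) (dim_row A) \<and> inverts_mat A B \<and> inverts_mat B A"
  have "?P B" using A B AB BA unfolding inverts_mat_def by auto
  hence "?P (mat_inv A)" unfolding mat_inv_def by (rule someI)
  hence C: "mat_inv A \<in> carrier_mat N N" "A * mat_inv A = 1\<^sub>m N"
    using A unfolding inverts_mat_def by auto
  have "mat_inv A = (B * A) * mat_inv A" using C(1) by (simp add: BA)
  also have "\<dots> = B * (A * mat_inv A)" by (rule assoc_mult_mat[OF B A C(1)])
  finally show ?thesis using B by (simp add: C(2))
qed

lemma mat_inv_nonsingular:
  fixes A :: "real mat"
  assumes A: "A \<in> carrier_mat N N" and d: "det A \<noteq> 0"
  shows "mat_inv A \<in> carrier_mat N N \<and> A * mat_inv A = 1\<^sub>m N \<and> mat_inv A * A = 1\<^sub>m N"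
proof -
  have "A \<in> Units (ring_mat TYPE(real) N ())" by (rule det_non_zero_imp_unit[OF A d])
  then obtain B where "B \<in> carrier_mat N N" "A * B = 1\<^sub>m N" "B * A = 1\<^sub>m N"
    unfolding Units_def ring_mat_simps by blast
  thus ?thesis using mat_inv_eq[OF A] by simp
qed

lemma condF_transpose_inverse:
  assumes L: "L \<in> carrier_mat N N" and A: "A \<in> carrier_mat N N"
    and LA: "L * A = 1\<^sub>m N" and AL: "A * L = 1\<^sub>m N"
  shows "condF (transpose_mat A) = frob_norm (abs_mat (transpose_mat L) * abs_mat (transpose_mat A))"
proof -
  have "mat_inv (transpose_mat A) = transpose_mat L"
    using L A by (intro mat_inv_eq) (simp_all flip: transpose_mult add: LA AL)
  thus ?thesis unfolding condF_def by simp
qed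

text \<open>J = diag(I_m, -I_n) is the diagonal matrix of the signs jsign m.\<close>

definition jsign :: "nat \<Rightarrow> nat \<Rightarrow> real" where
  "jsign m l = (if l < m then 1 else -1)"

lemma jsign_abs: "\<bar>jsign m l\<bar> = 1"
  by (simp add: jsign_def)

lemma dim_Jmat [simp]: "dim_row (Jmat m n) = m+n" "dim_col (Jmat m n) = m+n"
  by (simp_all add: Jmat_def)

lemma Jmat_carrier: "Jmat m n \<in> carrier_mat (m+n) (m+n)"
  by (rule carrier_matI) simp_all

lemma Jmat_index: "i < m+n \<Longrightarrow> j < m+n \<Longrightarrow> Jmat m n $$ (i,j) = (if i = j then jsign m i else 0)"
  by (auto simp: Jmat_def jsign_def)

lemma mult_Jmat_index:
  assumes "A \<in> carrier_mat a (m+n)" "i < a" "j < m+n"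
  shows "(A * Jmat m n) $$ (i,j) = A $$ (i,j) * jsign m j"
proof -
  have "(A * Jmat m n) $$ (i,j) = (\<Sum>l<m+n. A $$ (i,l) * Jmat m n $$ (l,j))"
    by (rule mult_mat_entry[OF assms(1) Jmat_carrier assms(2,3)])
  also have "\<dots> = (\<Sum>l<m+n. if l = j then A $$ (i,j) * jsign m j else 0)"
    using assms(3) by (intro sum.cong) (auto simp: Jmat_index)
  also have "\<dots> = A $$ (i,j) * jsign m j" using assms(3) by simp
  finally show ?thesis .
qed

lemma Jmat_squared: "Jmat m n * Jmat m n = 1\<^sub>m (m+n)"
  by (rule eq_matI)
    (simp_all add: mult_Jmat_index[OF Jmat_carrier] Jmat_index jsign_def del: index_mult_mat(1))

lemma transpose_Jmat: "transpose_mat (Jmat m n) = Jmat m n"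
  by (rule eq_matI) (auto simp: Jmat_index)

lemma frob_norm_mult_Jmat:
  assumes Y: "Y \<in> carrier_mat (m+n) (m+n)"
  shows "frob_norm (Y * Jmat m n) = frob_norm Y"
proof -
  have "Y * Jmat m n \<in> carrier_mat (m+n) (m+n)" using Y Jmat_carrier by auto
  hence "frob_norm (Y * Jmat m n) = fnorm (m+n) (\<lambda>p. \<bar>(Y * Jmat m n) $$ p\<bar>)"
    by (simp add: frob_norm_fnorm fnorm_abs)
  also have "\<dots> = fnorm (m+n) (\<lambda>p. \<bar>Y $$ p\<bar>)"
    by (rule fnorm_cong) (simp add: mult_Jmat_index[OF Y] abs_mult jsign_abs)
  also have "\<dots> = frob_norm Y" by (simp add: frob_norm_fnorm[OF Y] fnorm_abs)
  finally show ?thesis .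
qed

lemma sprod_Jmat:
  assumes "Y \<in> carrier_mat (m+n) (m+n)" "i < m+n" "j < m+n"
  shows "(Y * Jmat m n * transpose_mat Y) $$ (i,j)
           = sprod (m+n) (jsign m) (\<lambda>p. Y $$ p) (\<lambda>p. Y $$ p) (i,j)"
proof -
  have "(Y * Jmat m n * transpose_mat Y) $$ (i,j)
      = (\<Sum>l<m+n. (Y * Jmat m n) $$ (i,l) * transpose_mat Y $$ (l,j))"
    by (rule mult_mat_entry) (use assms Jmat_carrier in auto)
  also have "\<dots> = (\<Sum>l<m+n. Y $$ (i,l) * jsign m l * Y $$ (j,l))"
    using assms by (intro sum.cong) (auto simp: mult_Jmat_index simp del: index_mult_mat(1))
  finally show ?thesis by (simp add: sprod_def)
qed

lemma det_lower_tri_nonzero: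
  fixes A :: "real mat"
  assumes "A \<in> carrier_mat k k" "lower_tri A"
  shows "det A \<noteq> 0 \<longleftrightarrow> (\<forall>i<k. A $$ (i,i) \<noteq> 0)"
proof -
  have "det A = prod_list (diag_mat A)"
    using assms by (intro det_lower_triangular[of k]) (auto simp: lower_tri_def)
  thus ?thesis using assms(1) by (auto simp: prod_list_zero_iff diag_mat_def)
qed

lemma gen_chol_factor_iff:
  "gen_chol_factor m n L \<longleftrightarrow>
     L \<in> carrier_mat (m+n) (m+n) \<and> lower_tri L \<and> (\<forall>i<m+n. L $$ (i,i) \<noteq> 0)"
proof
  assume "gen_chol_factor m n L"
  then obtain L11 L21 L22 where c: "L11 \<in> carrier_mat m m" "L21 \<in> carrier_mat n m" "L22 \<in> carrier_mat n n"
    and lt: "lower_tri L11" "lower_tri L22" and d: "det L11 \<noteq> 0" "det L22 \<noteq> 0"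
    and L: "L = four_block_mat L11 (0\<^sub>m m n) L21 L22" and Lc: "L \<in> carrier_mat (m+n) (m+n)"
    unfolding gen_chol_factor_def by blast
  have "L $$ (i,i) \<noteq> 0" if "i < m+n" for i
    using that c d det_lower_tri_nonzero[OF c(1) lt(1)] det_lower_tri_nonzero[OF c(3) lt(2)]
    unfolding L by (cases "i < m") auto
  moreover have "lower_tri L"
    using c lt unfolding L lower_tri_def by auto
  ultimately show "L \<in> carrier_mat (m+n) (m+n) \<and> lower_tri L \<and> (\<forall>i<m+n. L $$ (i,i) \<noteq> 0)"
    using Lc by blast
next
  assume "L \<in> carrier_mat (m+n) (m+n) \<and> lower_tri L \<and> (\<forall>i<m+n. L $$ (i,i) \<noteq> 0)"
  hence Lc: "L \<in> carrier_mat (m+n) (m+n)" and lt: "lower_tri L"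
    and dg: "\<And>i. i < m+n \<Longrightarrow> L $$ (i,i) \<noteq> 0" by auto
  define L11 where "L11 = mat m m (\<lambda>(i,j). L $$ (i,j))"
  define L21 where "L21 = mat n m (\<lambda>(i,j). L $$ (i+m,j))"
  define L22 where "L22 = mat n n (\<lambda>(i,j). L $$ (i+m,j+m))"
  have c: "L11 \<in> carrier_mat m m" "L21 \<in> carrier_mat n m" "L22 \<in> carrier_mat n n"
    unfolding L11_def L21_def L22_def by auto
  have lt': "lower_tri L11" "lower_tri L22"
    using lt Lc unfolding L11_def L22_def lower_tri_def by auto
  have "det L11 \<noteq> 0" "det L22 \<noteq> 0"
    unfolding det_lower_tri_nonzero[OF c(1) lt'(1)] det_lower_tri_nonzero[OF c(3) lt'(2)]
    using dg by (auto simp: L11_def L22_def)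
  moreover have "L = four_block_mat L11 (0\<^sub>m m n) L21 L22"
    by (rule eq_matI) (use Lc lt c in \<open>auto simp: L11_def L21_def L22_def lower_tri_def\<close>)
  ultimately show "gen_chol_factor m n L"
    unfolding gen_chol_factor_def using Lc c lt' by blast
qed

lemma lower_tri_mult:
  assumes A: "A \<in> carrier_mat N N" "lower_tri A" and B: "B \<in> carrier_mat N N" "lower_tri B"
  shows "lower_tri (A * B)" and "i < N \<Longrightarrow> (A * B) $$ (i,i) = A $$ (i,i) * B $$ (i,i)"
proof -
  have vanish: "A $$ (i,l) * B $$ (l,j) = 0" if "l < N" "i < N" "j < N" "i < l \<or> l < j" for i j l
    using A B that unfolding lower_tri_def by auto
  show "lower_tri (A * B)"
    unfolding lower_tri_def
  proof (intro allI impI)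
    fix i j assume "i < dim_row (A * B)" "j < dim_col (A * B)" "i < j"
    hence ij: "i < N" "j < N" "i < j" using A B by auto
    show "(A * B) $$ (i,j) = 0"
      unfolding mult_mat_entry[OF A(1) B(1) ij(1,2)]
    proof (rule sum.neutral, intro ballI)
      fix l assume "l \<in> {..<N}"
      thus "A $$ (i,l) * B $$ (l,j) = 0" using ij by (intro vanish) auto
    qed
  qed
  assume i: "i < N"
  have "(A * B) $$ (i,i) = (\<Sum>l<N. if l = i then A $$ (i,i) * B $$ (i,i) else 0)"
    unfolding mult_mat_entry[OF A(1) B(1) i i]
  proof (rule sum.cong)
    fix l assume "l \<in> {..<N}"
    thus "A $$ (i,l) * B $$ (l,i) = (if l = i then A $$ (i,i) * B $$ (i,i) else 0)"
      using i vanish[of l i i] by (cases "l = i") (auto simp: nat_neq_iff)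
  qed simp
  thus "(A * B) $$ (i,i) = A $$ (i,i) * B $$ (i,i)" using i by simp
qed

lemma gen_chol_factor_mult:
  "gen_chol_factor m n A \<Longrightarrow> gen_chol_factor m n B \<Longrightarrow> gen_chol_factor m n (A * B)"
  unfolding gen_chol_factor_iff using lower_tri_mult[of A "m+n" B] by auto

lemma gen_chol_factor_inverse:
  assumes "gen_chol_factor m n L"
  shows "mat_inv L \<in> carrier_mat (m+n) (m+n) \<and> L * mat_inv L = 1\<^sub>m (m+n) \<and> mat_inv L * L = 1\<^sub>m (m+n)"
  using assms det_lower_tri_nonzero[of L "m+n"] mat_inv_nonsingular[of L "m+n"]
  unfolding gen_chol_factor_iff by auto

lemma gen_chol_congruence:
  assumes F: "is_gen_chol m n M F" and L: "gen_chol_factor m n L"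
  shows "is_gen_chol m n (L * M * transpose_mat L) (L * F)"
proof -
  have c: "L \<in> carrier_mat (m+n) (m+n)" "F \<in> carrier_mat (m+n) (m+n)"
    using F L unfolding is_gen_chol_def gen_chol_factor_iff by auto
  have "L * F * Jmat m n * transpose_mat (L * F) = L * (F * Jmat m n * transpose_mat F) * transpose_mat L"
    using c Jmat_carrier[of m n]
    by (simp add: transpose_mult[of _ "m+n" "m+n"] assoc_mult_mat[of _ "m+n" "m+n" _ "m+n" _ "m+n"])
  thus ?thesis using F L gen_chol_factor_mult unfolding is_gen_chol_def by auto
qed

lemma sign_correction_identity:
  fixes Y J :: "real mat"
  assumes Y: "Y \<in> carrier_mat N N" and J: "J \<in> carrier_mat N N"
    and JJ: "J * J = 1\<^sub>m N" and JT: "transpose_mat J = J"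
  shows "(1\<^sub>m N - Y * J) * J * transpose_mat (1\<^sub>m N - Y * J)
           = J - (Y + transpose_mat Y - Y * J * transpose_mat Y)"
proof -
  have YT: "transpose_mat Y \<in> carrier_mat N N" and YJ: "Y * J \<in> carrier_mat N N"
    and JYT: "J * transpose_mat Y \<in> carrier_mat N N" using Y J by auto
  have "(1\<^sub>m N - Y * J) * J = J - Y * (J * J)"
    using Y J YJ by (simp add: minus_mult_distrib_mat[of _ N N] assoc_mult_mat[of _ N N _ N _ N])
  hence left: "(1\<^sub>m N - Y * J) * J = J - Y" using Y by (simp add: JJ)
  have right: "transpose_mat (1\<^sub>m N - Y * J) = 1\<^sub>m N - J * transpose_mat Y"
    using Y J YJ by (simp add: transpose_minus[of _ N N] transpose_mult[of _ N N] JT)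
  have "(J - Y) * (1\<^sub>m N - J * transpose_mat Y) = (J - Y) * 1\<^sub>m N - (J - Y) * (J * transpose_mat Y)"
    using Y J JYT by (intro mult_minus_distrib_mat[of _ N N]) auto
  also have "(J - Y) * (J * transpose_mat Y) = J * (J * transpose_mat Y) - Y * (J * transpose_mat Y)"
    using Y J JYT by (intro minus_mult_distrib_mat) auto
  also have "J * (J * transpose_mat Y) = transpose_mat Y"
    using assoc_mult_mat[OF J J YT] YT by (simp add: JJ)
  also have "Y * (J * transpose_mat Y) = Y * J * transpose_mat Y"
    using assoc_mult_mat[OF Y J YT] by simp
  also have "(J - Y) * 1\<^sub>m N = J - Y" using Y J by simp
  also have "J - Y - (transpose_mat Y - Y * J * transpose_mat Y)
      = J - (Y + transpose_mat Y - Y * J * transpose_mat Y)"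
    using Y J YT by (intro eq_matI) (auto simp del: index_mult_mat(1))
  finally show ?thesis unfolding left right .
qed

lemma J_perturbation_factor:
  assumes Y: "Y \<in> carrier_mat (m+n) (m+n)" "lower_tri Y"
    and diag: "\<And>i. i < m+n \<Longrightarrow> \<bar>Y $$ (i,i)\<bar> < 1"
  shows "is_gen_chol m n (Jmat m n - (Y + transpose_mat Y - Y * Jmat m n * transpose_mat Y))
           (1\<^sub>m (m+n) - Y * Jmat m n)"
proof -
  let ?M = "1\<^sub>m (m+n) - Y * Jmat m n"
  have Mc: "?M \<in> carrier_mat (m+n) (m+n)" using Y Jmat_carrier by auto
  have entry: "?M $$ (i,j) = (if i = j then 1 else 0) - Y $$ (i,j) * jsign m j"
    if "i < m+n" "j < m+n" for i j
    using that Y Jmat_carrier[of m n] by (simp add: mult_Jmat_index del: index_mult_mat(1))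
  have "lower_tri ?M"
    using Y Mc entry unfolding lower_tri_def by auto
  moreover have "?M $$ (i,i) \<noteq> 0" if "i < m+n" for i
    using diag[OF that] entry[OF that that] by (auto simp: jsign_def split: if_splits)
  ultimately have "gen_chol_factor m n ?M" unfolding gen_chol_factor_iff using Mc by blast
  thus ?thesis
    unfolding is_gen_chol_def
    using sign_correction_identity[OF Y(1) Jmat_carrier Jmat_squared transpose_Jmat] by simp
qed

lemma sprod_mat:
  "i < N \<Longrightarrow> j < N \<Longrightarrow> sprod N s (\<lambda>p. mat N N Y $$ p) (\<lambda>p. mat N N Y $$ p) (i,j) = sprod N s Y Y (i,j)"
  unfolding sprod_def by (auto intro!: sum.cong)

text \<open>The core result, the case L = I of the theorem: a symmetric perturbation G of J with
  \<parallel>G\<parallel>_F \<le> g < 1/2 has a generalized Cholesky factor M with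
  \<parallel>I - M\<parallel>_F \<le> (1 - sqrt (1 - 2g)) / sqrt 2.  The factor is I - Y J for the small fixed point Y
  of the quadratic map.\<close>

lemma gen_chol_near_J:
  assumes G: "G \<in> carrier_mat (m+n) (m+n)" "transpose_mat G = G"
    and g: "frob_norm G \<le> g" "g < 1/2"
  shows "\<exists>M. is_gen_chol m n (Jmat m n - G) M
             \<and> frob_norm (1\<^sub>m (m+n) - M) \<le> (1 - sqrt (1 - 2*g)) / sqrt 2"
proof -
  let ?N = "m+n" and ?r = "(1 - sqrt (1 - 2*g)) / sqrt 2" and ?J = "Jmat m n"
  have sym: "sym_on ?N (\<lambda>p. G $$ p)"
    using G unfolding sym_on_def by (metis carrier_matD index_transpose_mat(1))
  have "\<exists>Y. (\<forall>i<?N. \<forall>j<?N. Y (i,j) = quad_map ?N (jsign m) (\<lambda>p. G $$ p) Y (i,j))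
            \<and> fnorm ?N Y \<le> ?r"
    by (rule quad_map_fixed_point[OF sym]) (use g frob_norm_fnorm[OF G(1)] jsign_abs in auto)
  then obtain Y where fp: "\<forall>i<?N. \<forall>j<?N. Y (i,j) = quad_map ?N (jsign m) (\<lambda>p. G $$ p) Y (i,j)"
    and nY: "fnorm ?N Y \<le> ?r" by blast
  define Ym where "Ym = mat ?N ?N Y"
  have Ym: "Ym \<in> carrier_mat ?N ?N" by (simp add: Ym_def)
  have "frob_norm Ym = fnorm ?N Y"
    unfolding frob_norm_fnorm[OF Ym] by (rule fnorm_cong) (simp add: Ym_def)
  hence nYm: "frob_norm Ym \<le> ?r" using nY by simp
  have "lower_tri Ym"
    using quad_map_fixed_point_eq(1)[OF sym fp] unfolding lower_tri_def Ym_def by auto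
  moreover have "\<bar>Ym $$ (i,i)\<bar> < 1" if "i < ?N" for i
  proof -
    have "?r \<le> 1 / sqrt 2" using g(2) by (simp add: divide_right_mono)
    also have "\<dots> < 1" by simp
    finally show ?thesis using fnorm_entry[OF that that, of "\<lambda>p. Ym $$ p"] nYm
      unfolding frob_norm_fnorm[OF Ym] by linarith
  qed
  moreover have "Ym + transpose_mat Ym - Ym * ?J * transpose_mat Ym = G"
  proof (rule eq_matI)
    fix i j assume "i < dim_row G" "j < dim_col G"
    hence ij: "i < ?N" "j < ?N" using G by auto
    show "(Ym + transpose_mat Ym - Ym * ?J * transpose_mat Ym) $$ (i,j) = G $$ (i,j)"
      using quad_map_fixed_point_eq(2)[OF sym fp ij] sprod_Jmat[OF Ym ij] ij Ym Jmat_carrier[of m n]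
      by (simp add: sprod_mat Ym_def del: index_mult_mat(1))
  qed (use G Ym in auto)
  ultimately have "is_gen_chol m n (?J - G) (1\<^sub>m ?N - Ym * ?J)"
    using J_perturbation_factor[OF Ym] by metis
  moreover have "1\<^sub>m ?N - (1\<^sub>m ?N - Ym * ?J) = Ym * ?J"
    using Ym Jmat_carrier[of m n] by (intro eq_matI) auto
  ultimately show ?thesis using nYm frob_norm_mult_Jmat[OF Ym] by metis
qed

lemma congruence_symmetric:
  fixes A X :: "real mat"
  assumes "A \<in> carrier_mat N N" "X \<in> carrier_mat N N" "transpose_mat X = X"
  shows "transpose_mat (A * X * transpose_mat A) = A * X * transpose_mat A"
proof -
  have "transpose_mat (A * X * transpose_mat A) = A * transpose_mat (A * X)"
    using assms transpose_mult[of "A * X" N N "transpose_mat A" N] by simp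
  also have "\<dots> = A * (X * transpose_mat A)"
    using assms transpose_mult[of A N N X N] by simp
  finally show ?thesis using assms by (simp add: assoc_mult_mat[of _ N N _ N _ N])
qed

lemma congruence_inverse_difference:
  fixes L A X C :: "real mat"
  assumes L: "L \<in> carrier_mat N N" and A: "A \<in> carrier_mat N N" and LA: "L * A = 1\<^sub>m N"
    and X: "X \<in> carrier_mat N N" and C: "C \<in> carrier_mat N N"
  shows "L * (C - A * X * transpose_mat A) * transpose_mat L = L * C * transpose_mat L - X"
proof -
  have AXA: "A * X * transpose_mat A \<in> carrier_mat N N" using A X by auto
  have "transpose_mat A * transpose_mat L = 1\<^sub>m N"
    using transpose_mult[OF L A] LA by simp
  moreover have "L * (A * X * transpose_mat A) = L * A * X * transpose_mat A"
    using L A X by (simp add: assoc_mult_mat[of _ N N _ N _ N])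
  hence "L * (A * X * transpose_mat A) = X * transpose_mat A"
    using X by (simp add: LA)
  ultimately have "L * (A * X * transpose_mat A) * transpose_mat L = X"
    using L A X by (simp add: assoc_mult_mat[of _ N N _ N _ N])
  moreover have "L * (C - A * X * transpose_mat A) * transpose_mat L
      = L * C * transpose_mat L - L * (A * X * transpose_mat A) * transpose_mat L"
    using L C AXA
    by (simp add: mult_minus_distrib_mat[of _ N N] minus_mult_distrib_mat[of _ N N])
  ultimately show ?thesis by simp
qed

lemma left_inverse_factor_difference:
  fixes A L M :: "real mat"
  assumes A: "A \<in> carrier_mat N N" and L: "L \<in> carrier_mat N N" and AL: "A * L = 1\<^sub>m N"
    and M: "M \<in> carrier_mat N N"
  shows "A * (L - L * M) = 1\<^sub>m N - M"
proof -
  have "A * (L - L * M) = A * L - A * (L * M)"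
    using A L M by (intro mult_minus_distrib_mat) auto
  also have "A * (L * M) = M" using assoc_mult_mat[OF A L M] AL M by simp
  finally show ?thesis using AL by simp
qed

theorem mainTheorem4:
  fixes m n :: nat and K dK Lt :: "real mat" and \<epsilon> :: real
  assumes "K \<in> carrier_mat (m+n) (m+n)" and "dK \<in> carrier_mat (m+n) (m+n)"
    and "transpose_mat K = K" and "transpose_mat dK = dK"
    and "is_gen_chol m n (K + dK) Lt"
    and "abs_mat dK \<le> \<epsilon> \<cdot>\<^sub>m (abs_mat Lt * abs_mat (transpose_mat Lt))"
    and "\<epsilon> \<ge> 0"
    and "condF Lt * condF (transpose_mat (mat_inv Lt)) * \<epsilon> < 1/2"
  shows "\<exists>L. is_gen_chol m n K L \<and>
           frob_norm (mat_inv Lt * (Lt - L))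
             \<le> (1 / sqrt 2) * (1 - sqrt (1 - 2 * condF Lt * condF (transpose_mat (mat_inv Lt)) * \<epsilon>))"
proof -
  let ?N = "m + n" and ?J = "Jmat m n"
  define A where "A = mat_inv Lt"
  define G where "G = A * dK * transpose_mat A"
  define g where "g = condF Lt * condF (transpose_mat A) * \<epsilon>"
  have Lt: "gen_chol_factor m n Lt" and KdK: "Lt * ?J * transpose_mat Lt = K + dK"
    using assms(5) unfolding is_gen_chol_def by auto
  have Ltc: "Lt \<in> carrier_mat ?N ?N" using Lt unfolding gen_chol_factor_iff by blast
  have A: "A \<in> carrier_mat ?N ?N" "Lt * A = 1\<^sub>m ?N" "A * Lt = 1\<^sub>m ?N"
    using gen_chol_factor_inverse[OF Lt] unfolding A_def by auto
  have Gc: "G \<in> carrier_mat ?N ?N" using A(1) assms(2) unfolding G_def by auto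
  have Gsym: "transpose_mat G = G"
    unfolding G_def by (rule congruence_symmetric[OF A(1) assms(2,4)])
  have "frob_norm G \<le> g"
    using congruence_frob_bound[OF A(1) Ltc assms(2,6,7)] condF_transpose_inverse[OF Ltc A]
    unfolding G_def g_def condF_def A_def by (simp add: mult.commute)
  then obtain M where M: "is_gen_chol m n (?J - G) M"
    and nM: "frob_norm (1\<^sub>m ?N - M) \<le> (1 - sqrt (1 - 2*g)) / sqrt 2"
    using gen_chol_near_J[OF Gc Gsym] assms(8)
    unfolding g_def A_def by blast
  have "Lt * (?J - G) * transpose_mat Lt = K"
  proof -
    have "K + dK - dK = K" using assms(1,2) by (intro eq_matI) auto
    thus ?thesis
      using congruence_inverse_difference[OF Ltc A(1,2) assms(2) Jmat_carrier] KdK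
      unfolding G_def by simp
  qed
  hence "is_gen_chol m n K (Lt * M)" using gen_chol_congruence[OF M Lt] by simp
  moreover have "mat_inv Lt * (Lt - Lt * M) = 1\<^sub>m ?N - M"
    using left_inverse_factor_difference[OF A(1) Ltc A(3)] M
    unfolding A_def is_gen_chol_def gen_chol_factor_iff by blast
  ultimately show ?thesis using nM unfolding g_def A_def by (auto simp: mult.assoc)
qed

end
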